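(* Let $(x,q)\in\mathbf J$. Then $(x,q)$ belongs to the closure $\overline{\mathbf U}$ (in $\mathbb R^2$) of $\mathbf U$ if and only if $$\overline{a_{n+1}(x,q)a_{n+2}(x,q)\ldots}\le \alpha_1(q)\alpha_2(q)\ldots\quad\text{(lexicographically) for every } n\ge1 \text{ with } a_n(x,q)>0.$$
   Context: For real $q>1$ let $\lceil q\rceil$ be the smallest integer $\ge q$ and $A_q=\{0,1,\ldots,\lceil q\rceil-1\}$. An expansion of $x$ in base $q$ is a sequence $(c_i)_{i\ge1}$ with $c_i\in A_q$ and $x=\sum_{i\ge1}c_iq^{-i}$. Let $\mathbf J$ be the set of $(x,q)\in\mathbb R\times(1,\infty)$ such that $x$ has at least one expansion in base $q$; equivalently $q>1$ and $x\in J_q:=[0,(\lceil q\rceil-1)/(q-1)]$. Let $\mathbf U$ be the set of $(x,q)\in\mathbf J$ such that $x$ has exactly one expansion in base $q$. For $(x,q)\in\mathbf J$, the quasi-greedy expansion $(a_i(x,q))$ is defined as follows: if $x=0$ it is $0^\infty$; if $x>0$ and $a_1(x,q),\ldots,a_{n-1}(x,q)$ are defined, $a_n(x,q)$ is the largest element of $A_q$ with $\sum_{i=1}^n a_i(x,q)q^{-i}<x$. Set $\alpha_i(q):=a_i(1,q)$; note $\alpha_1(q)=\lceil q\rceil-1$. The conjugate of a digit is $\overline{a_i(x,q)}:=\alpha_1(q)-a_i(x,q)$, and for a sequence $\overline{c_1c_2\ldots}:=\overline{c_1}\,\overline{c_2}\ldots$. Sequences are compared in the lexicographic order. *)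

theory Defs
  imports "HOL-Analysis.Analysis"
begin

text \<open>Digits are natural numbers; the alphabet A_q = {0,...,ceil q - 1}.
Sequences (c_1 c_2 ...) are represented 0-based as functions c :: nat => nat
with c i standing for c_(i+1).\<close>

definition digmax :: "real \<Rightarrow> nat" where
  "digmax q = nat \<lceil>q\<rceil> - 1"

definition is_expansion :: "real \<Rightarrow> real \<Rightarrow> (nat \<Rightarrow> nat) \<Rightarrow> bool" where
  "is_expansion x q c \<longleftrightarrow> (\<forall>i. c i \<le> digmax q) \<and> ((\<lambda>i. real (c i) / q ^ Suc i) sums x)"

definition setJ :: "(real \<times> real) set" where
  "setJ = {(x, q). q > 1 \<and> 0 \<le> x \<and> x \<le> (of_int \<lceil>q\<rceil> - 1) / (q - 1)}"

definition setU :: "(real \<times> real) set" where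
  "setU = {(x, q). (x, q) \<in> setJ \<and> (\<exists>!c. is_expansion x q c)}"

text \<open>First n digits of the quasi-greedy expansion (list index i = digit i+1).\<close>
fun qg_prefix :: "real \<Rightarrow> real \<Rightarrow> nat \<Rightarrow> nat list" where
  "qg_prefix x q 0 = []"
| "qg_prefix x q (Suc n) =
     (let p = qg_prefix x q n;
          s = (\<Sum>i<n. real (p ! i) / q ^ Suc i)
      in p @ [if x = 0 then 0
              else (GREATEST d. d \<le> digmax q \<and> s + real d / q ^ Suc n < x)])"

text \<open>a_n(x,q) for n \<ge> 1 (value at n = 0 is irrelevant).\<close>
definition qg :: "real \<Rightarrow> real \<Rightarrow> nat \<Rightarrow> nat" where
  "qg x q n = (if n = 0 then 0 else qg_prefix x q n ! (n - 1))"

definition alpha :: "real \<Rightarrow> nat \<Rightarrow> nat" where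
  "alpha q i = qg 1 q i"

definition lex_le :: "(nat \<Rightarrow> nat) \<Rightarrow> (nat \<Rightarrow> nat) \<Rightarrow> bool" where
  "lex_le s t \<longleftrightarrow> s = t \<or> (\<exists>k. (\<forall>i<k. s i = t i) \<and> s k < t k)"

end

theory Submission
  imports Defs
begin

text \<open>
For \<open>x > 0\<close> everything is expressed through the quasi-greedy remainders
\<open>r\<^sub>n = q\<^sup>n (x - a\<^sub>1/q - \<dots> - a\<^sub>n/q\<^sup>n)\<close> (\<open>qg_rem\<close>): the next digit is the largest digit below
\<open>q r\<^sub>n\<close>, and the tail after \<open>a\<^sub>n\<close> has value \<open>r\<^sub>n\<close>. Let \<open>M = (\<lceil>q\<rceil> - 1)/(q - 1)\<close> (\<open>Jmax\<close>) be
the right end of \<open>J\<^sub>q\<close>. In a point of \<open>U\<close> the remainder after every nonzero digit exceeds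
\<open>M - 1\<close>, since otherwise the digit could be lowered by one and the tail raised by one. For
non-integer \<open>q\<close> finitely many quasi-greedy digits depend continuously on \<open>(x, q)\<close> at points
obeying this bound, so the weak bound \<open>r\<^sub>n \<ge> M - 1\<close> after nonzero digits passes to the
closure; for integer \<open>q\<close> it is empty because \<open>M = 1\<close>. The bound says that the conjugate tail
has value at most 1, and a sequence lexicographically above \<open>\<alpha>(q)\<close> has value above 1.

Conversely, if the condition holds and \<open>q\<close> is not an integer, the same digit sequence read in a
slightly larger base \<open>r\<close> with the same alphabet is a unique expansion: by Parry's criterion its
tails after non-maximal digits and its conjugate tails after nonzero digits have value below 1
in base \<open>r\<close>, because \<open>\<alpha>(r)\<close> is lexicographically strictly larger than \<open>\<alpha>(q)\<close>. Letting
\<open>r \<down> q\<close> gives points of \<open>U\<close> converging to \<open>(x, q)\<close>. For integer \<open>q\<close> every irrational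
point of \<open>(0, 1)\<close> has a unique expansion.
\<close>

definition Jmax :: "real \<Rightarrow> real" where
  "Jmax q = real (digmax q) / (q - 1)"

definition qg_digit :: "real \<Rightarrow> real \<Rightarrow> nat" where
  "qg_digit q r = (GREATEST d. d \<le> digmax q \<and> real d < q * r)"

fun qg_rem :: "real \<Rightarrow> real \<Rightarrow> nat \<Rightarrow> real" where
  "qg_rem q r 0 = r"
| "qg_rem q r (Suc n) = q * qg_rem q r n - real (qg_digit q (qg_rem q r n))"

definition qg_seq :: "real \<Rightarrow> real \<Rightarrow> nat \<Rightarrow> nat" where
  "qg_seq q r i = qg_digit q (qg_rem q r i)"

definition expval :: "real \<Rightarrow> (nat \<Rightarrow> nat) \<Rightarrow> real" where
  "expval q c = (\<Sum>i. real (c i) / q ^ Suc i)"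

lemma digmax_real:
  assumes "q > 1" shows "real (digmax q) = of_int \<lceil>q\<rceil> - 1"
proof -
  have "\<lceil>q\<rceil> \<ge> 2" using assms by (simp add: less_ceiling_iff)
  then have "real (nat \<lceil>q\<rceil> - 1) = real (nat \<lceil>q\<rceil>) - 1" by (simp add: of_nat_diff le_nat_iff)
  moreover have "real (nat \<lceil>q\<rceil>) = of_int \<lceil>q\<rceil>" using \<open>\<lceil>q\<rceil> \<ge> 2\<close> by simp
  ultimately show ?thesis unfolding digmax_def by linarith
qed

lemma digmax_bounds:
  assumes "q > 1"
  shows "real (digmax q) < q" "q \<le> real (digmax q) + 1" "1 \<le> digmax q"
  using digmax_real[OF assms] assms by linarith+

lemma Jmax_ge_1: "q > 1 \<Longrightarrow> 1 \<le> Jmax q"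
  using digmax_bounds(2) unfolding Jmax_def by (simp add: field_simps)

lemma Jmax_fixpoint: "q > 1 \<Longrightarrow> q * Jmax q - real (digmax q) = Jmax q"
  unfolding Jmax_def by (simp add: field_simps)

lemma Jmax_eq_1_iff: "q > 1 \<Longrightarrow> Jmax q = 1 \<longleftrightarrow> of_int \<lceil>q\<rceil> = q"
  using digmax_real unfolding Jmax_def by (auto simp: field_simps)

lemma setJ_iff: "(x, q) \<in> setJ \<longleftrightarrow> q > 1 \<and> 0 \<le> x \<and> x \<le> Jmax q"
  unfolding setJ_def Jmax_def using digmax_real by auto

section \<open>Quasi-greedy digits and remainders\<close>

lemma qg_digit_bounds:
  assumes "q > 1" "r > 0"
  shows "qg_digit q r \<le> digmax q" "real (qg_digit q r) < q * r"
proof -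
  have "qg_digit q r \<le> digmax q \<and> real (qg_digit q r) < q * r"
    unfolding qg_digit_def by (rule GreatestI_nat[where b = "digmax q"]) (use assms in auto)
  then show "qg_digit q r \<le> digmax q" "real (qg_digit q r) < q * r" by auto
qed

lemma qg_digit_greatest: "d \<le> digmax q \<Longrightarrow> real d < q * r \<Longrightarrow> d \<le> qg_digit q r"
  unfolding qg_digit_def by (rule Greatest_le_nat[where b = "digmax q"]) auto

lemma qg_digit_nonmax:
  assumes "q > 1" "r > 0" "qg_digit q r < digmax q"
  shows "q * r \<le> real (qg_digit q r) + 1"
proof (rule ccontr)
  assume "\<not> ?thesis"
  then have "Suc (qg_digit q r) \<le> qg_digit q r"
    using assms(3) by (intro qg_digit_greatest) auto
  then show False by simp
qed

lemma qg_digit_mono: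
  assumes "q > 1" "0 < r" "r \<le> r'"
  shows "qg_digit q r \<le> qg_digit q r'"
proof (rule qg_digit_greatest)
  show "qg_digit q r \<le> digmax q" using qg_digit_bounds(1)[OF assms(1,2)] .
  have "q * r \<le> q * r'" using assms by simp
  then show "real (qg_digit q r) < q * r'" using qg_digit_bounds(2)[OF assms(1,2)] by linarith
qed

lemma qg_digit_1: "q > 1 \<Longrightarrow> qg_digit q 1 = digmax q"
  using qg_digit_bounds(1)[of q 1] qg_digit_greatest[of "digmax q" q 1] digmax_bounds(1)[of q]
  by simp

lemma qg_rem_bounds:
  assumes q: "q > 1" and r: "0 < r" "r \<le> Jmax q"
  shows "0 < qg_rem q r n \<and> qg_rem q r n \<le> Jmax q"
proof (induction n)
  case 0
  then show ?case using r by simp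
next
  case (Suc n)
  let ?r = "qg_rem q r n"
  have pos: "0 < qg_rem q r (Suc n)" using qg_digit_bounds(2)[OF q] Suc by simp
  show ?case
  proof (cases "qg_digit q ?r < digmax q")
    case True
    then show ?thesis using qg_digit_nonmax[OF q _ True] Suc pos Jmax_ge_1[OF q] by simp
  next
    case False
    then have "qg_digit q ?r = digmax q" using qg_digit_bounds(1)[OF q] Suc by (simp add: leD le_antisym)
    then have "qg_rem q r (Suc n) \<le> q * Jmax q - real (digmax q)" using Suc q by simp
    then show ?thesis using pos Jmax_fixpoint[OF q] by simp
  qed
qed

lemma qg_seq_le_digmax:
  "q > 1 \<Longrightarrow> 0 < r \<Longrightarrow> r \<le> Jmax q \<Longrightarrow> qg_seq q r i \<le> digmax q"
  unfolding qg_seq_def using qg_digit_bounds(1) qg_rem_bounds by blast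

lemma qg_rem_le_1:
  assumes "q > 1" "0 < r" "r \<le> Jmax q" "qg_seq q r n < digmax q"
  shows "qg_rem q r (Suc n) \<le> 1"
  using qg_digit_nonmax[OF assms(1) _ assms(4)[unfolded qg_seq_def]] qg_rem_bounds[OF assms(1-3)]
  by (simp add: qg_seq_def)

lemma qg_rem_add: "qg_rem q (qg_rem q r n) k = qg_rem q r (n + k)"
  by (induction k) auto

lemma qg_seq_shift: "qg_seq q (qg_rem q r n) k = qg_seq q r (n + k)"
  unfolding qg_seq_def qg_rem_add ..

lemma qg_seq_partial_sum:
  assumes "q > 1"
  shows "(\<Sum>i<n. real (qg_seq q r i) / q ^ Suc i) = r - qg_rem q r n / q ^ n"
proof (induction n)
  case (Suc n)
  then have "(\<Sum>i<Suc n. real (qg_seq q r i) / q ^ Suc i)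
      = r - qg_rem q r n / q ^ n + real (qg_seq q r n) / q ^ Suc n"
    by simp
  also have "\<dots> = r - qg_rem q r (Suc n) / q ^ Suc n"
    using assms by (simp add: qg_seq_def field_simps)
  finally show ?case .
qed simp

lemma qg_seq_sums:
  assumes q: "q > 1" and r: "0 < r" "r \<le> Jmax q"
  shows "(\<lambda>i. real (qg_seq q r i) / q ^ Suc i) sums r"
proof -
  have "(\<lambda>n. qg_rem q r n / q ^ n) \<longlonglongrightarrow> 0"
  proof (rule Lim_null_comparison[OF always_eventually])
    show "\<forall>n. norm (qg_rem q r n / q ^ n) \<le> Jmax q * (1 / q) ^ n"
    proof
      fix n
      have "norm (qg_rem q r n / q ^ n) = qg_rem q r n / q ^ n"
        using qg_rem_bounds[OF q r, of n] q by simp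
      also have "\<dots> \<le> Jmax q / q ^ n"
        using qg_rem_bounds[OF q r, of n] q by (simp add: divide_right_mono)
      finally show "norm (qg_rem q r n / q ^ n) \<le> Jmax q * (1 / q) ^ n"
        by (simp add: power_divide)
    qed
    show "(\<lambda>n. Jmax q * (1 / q) ^ n) \<longlonglongrightarrow> 0"
      using q by (intro tendsto_mult_right_zero LIMSEQ_power_zero) auto
  qed
  then have "(\<lambda>n. r - qg_rem q r n / q ^ n) \<longlonglongrightarrow> r - 0"
    by (intro tendsto_diff tendsto_const)
  then show ?thesis unfolding sums_def qg_seq_partial_sum[OF q] by simp
qed

lemma qg_prefix_length: "length (qg_prefix x q n) = n"
  by (induction n) (auto simp: Let_def)

lemma qg_prefix_nth: "i < n \<Longrightarrow> qg_prefix x q n ! i = qg x q (Suc i)"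
proof (induction n)
  case (Suc n)
  show ?case
  proof (cases "i < n")
    case True
    then show ?thesis using Suc qg_prefix_length[of x q n] by (simp add: Let_def nth_append)
  next
    case False
    then have "i = n" using Suc by simp
    then show ?thesis unfolding qg_def by simp
  qed
qed simp

lemma qg_Suc: "qg x q (Suc n) = (if x = 0 then 0 else
   (GREATEST d. d \<le> digmax q \<and> (\<Sum>i<n. real (qg x q (Suc i)) / q ^ Suc i) + real d / q ^ Suc n < x))"
proof -
  have "qg x q (Suc n) = (if x = 0 then 0 else
     (GREATEST d. d \<le> digmax q \<and> (\<Sum>i<n. real (qg_prefix x q n ! i) / q ^ Suc i) + real d / q ^ Suc n < x))"
    unfolding qg_def using qg_prefix_length[of x q n] by (simp add: Let_def nth_append)
  also have "(\<Sum>i<n. real (qg_prefix x q n ! i) / q ^ Suc i) = (\<Sum>i<n. real (qg x q (Suc i)) / q ^ Suc i)"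
    by (rule sum.cong) (auto simp: qg_prefix_nth)
  finally show ?thesis .
qed

lemma qg_zero: "qg 0 q n = 0"
  by (cases n) (simp_all add: qg_def Let_def nth_append qg_prefix_length)

lemma qg_eq_qg_seq:
  assumes q: "q > 1" and x: "0 < x" "x \<le> Jmax q"
  shows "qg x q (Suc n) = qg_seq q x n"
proof (induction n rule: less_induct)
  case (less n)
  have "(\<Sum>i<n. real (qg x q (Suc i)) / q ^ Suc i) = (\<Sum>i<n. real (qg_seq q x i) / q ^ Suc i)"
    using less by (intro sum.cong) auto
  also have "\<dots> = x - qg_rem q x n / q ^ n" by (rule qg_seq_partial_sum[OF q])
  finally have sum: "(\<Sum>i<n. real (qg x q (Suc i)) / q ^ Suc i) = x - qg_rem q x n / q ^ n" .
  have "x - qg_rem q x n / q ^ n + real d / q ^ Suc n < x \<longleftrightarrow> real d < q * qg_rem q x n" for d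
  proof -
    have "x - qg_rem q x n / q ^ n + real d / q ^ Suc n < x \<longleftrightarrow> real d / q ^ Suc n < qg_rem q x n / q ^ n"
      by linarith
    also have "\<dots> \<longleftrightarrow> real d < q * qg_rem q x n" using q by (simp add: field_simps)
    finally show ?thesis .
  qed
  then show ?case using qg_Suc[of x q n] x unfolding sum qg_seq_def qg_digit_def by simp
qed

lemma alpha_eq_qg_seq: "q > 1 \<Longrightarrow> alpha q (Suc i) = qg_seq q 1 i"
  unfolding alpha_def using qg_eq_qg_seq Jmax_ge_1 by simp

lemma alpha_1: "q > 1 \<Longrightarrow> alpha q 1 = digmax q"
  using alpha_eq_qg_seq[of q 0] qg_digit_1 by (simp add: qg_seq_def)

section \<open>Values of digit sequences\<close>

lemma sums_inverse_power_Suc: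
  fixes q :: real assumes "q > 1" shows "(\<lambda>i. 1 / q ^ Suc i) sums (1 / (q - 1))"
proof -
  have "(\<lambda>i. (1/q) * (1/q) ^ i) sums ((1/q) * (1 / (1 - 1/q)))"
    using assms by (intro sums_mult geometric_sums) simp
  moreover have "(1/q) * (1 / (1 - 1/q)) = 1 / (q - 1)" using assms by (simp add: field_simps)
  ultimately show ?thesis by (simp add: power_divide)
qed

lemma digmax_sums: "q > 1 \<Longrightarrow> (\<lambda>i. real (digmax q) / q ^ Suc i) sums Jmax q"
  using sums_mult[OF sums_inverse_power_Suc, of q "real (digmax q)"] unfolding Jmax_def by simp

lemma expval_summable:
  assumes "q > 1" "\<And>i. c i \<le> digmax q"
  shows "summable (\<lambda>i. real (c i) / q ^ Suc i)"
proof (rule summable_comparison_test'[where g = "\<lambda>i. real (digmax q) / q ^ Suc i"])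
  show "summable (\<lambda>i. real (digmax q) / q ^ Suc i)" using digmax_sums[OF assms(1)] by (rule sums_summable)
  show "norm (real (c n) / q ^ Suc n) \<le> real (digmax q) / q ^ Suc n" for n
    using assms by (simp add: divide_right_mono)
qed

lemma expval_sums:
  "q > 1 \<Longrightarrow> (\<And>i. c i \<le> digmax q) \<Longrightarrow> (\<lambda>i. real (c i) / q ^ Suc i) sums expval q c"
  unfolding expval_def by (intro summable_sums expval_summable)

lemma expval_eqI: "(\<lambda>i. real (c i) / q ^ Suc i) sums y \<Longrightarrow> expval q c = y"
  unfolding expval_def by (rule sums_unique[symmetric])

lemma expval_nonneg: "q > 1 \<Longrightarrow> (\<And>i. c i \<le> digmax q) \<Longrightarrow> 0 \<le> expval q c"
  unfolding expval_def by (intro suminf_nonneg expval_summable) auto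

lemma expval_pos:
  assumes "q > 1" "\<And>i. c i \<le> digmax q" "c j > 0"
  shows "expval q c > 0"
  unfolding expval_def using expval_summable[OF assms(1,2)] assms(1,3)
  by (intro suminf_pos2[where i = j]) auto

lemma expval_le_Jmax:
  assumes "q > 1" "\<And>i. c i \<le> digmax q"
  shows "expval q c \<le> Jmax q"
  using assms by (intro sums_le[OF _ expval_sums digmax_sums]) (auto simp: divide_right_mono)

lemma is_expansion_expval:
  "q > 1 \<Longrightarrow> (\<And>i. c i \<le> digmax q) \<Longrightarrow> is_expansion (expval q c) q c"
  unfolding is_expansion_def using expval_sums by blast

lemma expval_split:
  assumes "q > 1" "\<And>i. c i \<le> digmax q"
  shows "expval q c = (\<Sum>i<N. real (c i) / q ^ Suc i) + expval q (\<lambda>i. c (N + i)) / q ^ N"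
proof -
  have "expval q c = (\<Sum>i. real (c (i + N)) / q ^ Suc (i + N)) + (\<Sum>i<N. real (c i) / q ^ Suc i)"
    unfolding expval_def by (rule suminf_split_initial_segment[OF expval_summable[OF assms]])
  also have "(\<lambda>i. real (c (i + N)) / q ^ Suc (i + N)) = (\<lambda>i. (real (c (N + i)) / q ^ Suc i) / q ^ N)"
    by (auto simp: power_add add.commute)
  also have "(\<Sum>i. (real (c (N + i)) / q ^ Suc i) / q ^ N) = expval q (\<lambda>i. c (N + i)) / q ^ N"
    unfolding expval_def using assms by (intro suminf_divide expval_summable) auto
  finally show ?thesis by simp
qed

lemma expval_digit_tail_eq:
  assumes q: "q > 1" and c: "\<And>i. c i \<le> digmax q" and d: "\<And>i. d i \<le> digmax q"
    and eq: "expval q c = expval q d" and agree: "\<forall>i<n. c i = d i"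
  shows "real (c n) + expval q (\<lambda>i. c (Suc n + i)) = real (d n) + expval q (\<lambda>i. d (Suc n + i))"
proof -
  have "(\<Sum>i<n. real (c i) / q ^ Suc i) = (\<Sum>i<n. real (d i) / q ^ Suc i)"
    using agree by (intro sum.cong) auto
  then have "real (c n) / q ^ Suc n + expval q (\<lambda>i. c (Suc n + i)) / q ^ Suc n
      = real (d n) / q ^ Suc n + expval q (\<lambda>i. d (Suc n + i)) / q ^ Suc n"
    using expval_split[of q c "Suc n", OF q c] expval_split[of q d "Suc n", OF q d] eq
    unfolding sum.lessThan_Suc by linarith
  then have "(real (c n) + expval q (\<lambda>i. c (Suc n + i))) / q ^ Suc n
      = (real (d n) + expval q (\<lambda>i. d (Suc n + i))) / q ^ Suc n"
    by (simp only: add_divide_distrib)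
  then show ?thesis using q by (simp add: divide_cancel_right)
qed

lemma expval_conj:
  assumes "q > 1" "\<And>i. c i \<le> digmax q"
  shows "expval q (\<lambda>i. digmax q - c i) = Jmax q - expval q c"
proof (rule expval_eqI)
  have "(\<lambda>i. real (digmax q) / q ^ Suc i - real (c i) / q ^ Suc i) sums (Jmax q - expval q c)"
    using assms by (intro sums_diff digmax_sums expval_sums)
  then show "(\<lambda>i. real (digmax q - c i) / q ^ Suc i) sums (Jmax q - expval q c)"
    using assms(2) by (simp add: of_nat_diff diff_divide_distrib)
qed

lemma expval_qg_seq_tail:
  assumes "q > 1" "0 < r" "r \<le> Jmax q"
  shows "expval q (\<lambda>i. qg_seq q r (n + i)) = qg_rem q r n"
  unfolding qg_seq_shift[symmetric]
  using qg_rem_bounds[OF assms, of n] by (intro expval_eqI qg_seq_sums assms(1)) auto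

lemma expval_qg_seq: "q > 1 \<Longrightarrow> 0 < r \<Longrightarrow> r \<le> Jmax q \<Longrightarrow> expval q (qg_seq q r) = r"
  using expval_qg_seq_tail[of q r 0] by simp

lemma expval_conj_qg_seq_tail:
  assumes "q > 1" "0 < r" "r \<le> Jmax q"
  shows "expval q (\<lambda>i. digmax q - qg_seq q r (n + i)) = Jmax q - qg_rem q r n"
  using expval_conj[OF assms(1), of "\<lambda>i. qg_seq q r (n + i)"] qg_seq_le_digmax[OF assms]
    expval_qg_seq_tail[OF assms] by simp

lemma expval_larger_base:
  assumes q: "q > 1" and qr: "q < r" and m: "digmax r = digmax q" and c: "\<And>i. c i \<le> digmax q"
  shows "expval r c \<le> expval q c" and "expval q c - expval r c \<le> Jmax q - Jmax r"
    and "c j > 0 \<Longrightarrow> expval r c < expval q c"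
proof -
  have r: "r > 1" using q qr by simp
  have cr: "\<And>i. c i \<le> digmax r" using c m by simp
  have gap: "0 \<le> 1 / q ^ Suc i - 1 / r ^ Suc i" for i
  proof -
    have "q ^ Suc i \<le> r ^ Suc i" using q qr by (intro power_mono) auto
    then show ?thesis using q by (simp add: frac_le)
  qed
  have diff: "(\<lambda>i. real (c i) * (1 / q ^ Suc i - 1 / r ^ Suc i)) sums (expval q c - expval r c)"
    using sums_diff[OF expval_sums[of q c, OF q c] expval_sums[of r c, OF r cr]]
    by (simp add: right_diff_distrib)
  then show "expval r c \<le> expval q c"
    using sums_le[OF _ sums_zero diff] gap by simp
  have "real (c i) * (1 / q ^ Suc i - 1 / r ^ Suc i) \<le> real (digmax q) * (1 / q ^ Suc i - 1 / r ^ Suc i)" for i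
    using c gap by (intro mult_right_mono) auto
  moreover have "(\<lambda>i. real (digmax q) * (1 / q ^ Suc i - 1 / r ^ Suc i)) sums (Jmax q - Jmax r)"
    using sums_diff[OF digmax_sums[OF q] digmax_sums[OF r]] m by (simp add: right_diff_distrib)
  ultimately show "expval q c - expval r c \<le> Jmax q - Jmax r"
    by (rule sums_le[OF _ diff])
  assume "c j > 0"
  moreover have "1 / r ^ Suc j < 1 / q ^ Suc j"
    using q qr by (intro divide_strict_left_mono power_strict_mono) auto
  ultimately have "0 < real (c j) * (1 / q ^ Suc j - 1 / r ^ Suc j)" by simp
  then have "0 < (\<Sum>i. real (c i) * (1 / q ^ Suc i - 1 / r ^ Suc i))"
    using gap by (intro suminf_pos2[OF sums_summable[OF diff]]) auto
  then show "expval r c < expval q c" using sums_unique[OF diff] by simp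
qed

section \<open>Lexicographic order\<close>

lemma not_lex_le:
  assumes "\<not> lex_le s t" shows "\<exists>k. (\<forall>i<k. s i = t i) \<and> t k < s k"
proof -
  have ex: "\<exists>n. s n \<noteq> t n" using assms unfolding lex_le_def by auto
  define k where "k = (LEAST n. s n \<noteq> t n)"
  have "s k \<noteq> t k" unfolding k_def by (rule LeastI_ex[OF ex])
  moreover have "\<forall>i<k. s i = t i" unfolding k_def using not_less_Least by blast
  ultimately show ?thesis using assms unfolding lex_le_def by (auto intro!: exI[of _ k])
qed

lemma lex_le_trans:
  assumes "lex_le s t" "lex_le t u" shows "lex_le s u"
proof (cases "s = t \<or> t = u")
  case True
  then show ?thesis using assms by auto
next
  case False
  then obtain k1 k2 where "\<forall>i<k1. s i = t i" "s k1 < t k1" "\<forall>i<k2. t i = u i" "t k2 < u k2"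
    using assms unfolding lex_le_def by blast
  then have "(\<forall>i<min k1 k2. s i = u i) \<and> s (min k1 k2) < u (min k1 k2)"
    by (cases k1 k2 rule: linorder_cases) auto
  then show ?thesis unfolding lex_le_def by blast
qed

lemma lex_le_antisym:
  assumes "lex_le s t" "lex_le t s" shows "s = t"
proof (rule ccontr)
  assume "s \<noteq> t"
  then obtain k1 k2 where "\<forall>i<k1. s i = t i" "s k1 < t k1" "\<forall>i<k2. t i = s i" "t k2 < s k2"
    using assms unfolding lex_le_def by blast
  then show False by (cases k1 k2 rule: linorder_cases) auto
qed

lemma qg_seq_lex_mono:
  assumes q: "q > 1" and r: "0 < r" "r \<le> r'" "r' \<le> Jmax q"
  shows "lex_le (qg_seq q r) (qg_seq q r')"
proof (rule ccontr)
  assume "\<not> ?thesis"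
  then obtain k where k: "\<forall>i<k. qg_seq q r i = qg_seq q r' i" "qg_seq q r' k < qg_seq q r k"
    using not_lex_le by blast
  have rJ: "r \<le> Jmax q" using r by simp
  have "j \<le> k \<Longrightarrow> qg_rem q r j \<le> qg_rem q r' j" for j
  proof (induction j)
    case (Suc j)
    then show ?case using k(1) q by (simp add: qg_seq_def)
  qed (use r in simp)
  then have "qg_seq q r k \<le> qg_seq q r' k"
    unfolding qg_seq_def using qg_digit_mono[OF q] qg_rem_bounds[OF q r(1) rJ] by blast
  then show False using k(2) by simp
qed

lemma qg_seq_tail_lex_le_alpha:
  assumes q: "q > 1" and x: "0 < x" "x \<le> Jmax q" and n: "qg_seq q x n < digmax q"
  shows "lex_le (\<lambda>i. qg_seq q x (Suc n + i)) (qg_seq q 1)"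
proof -
  have "lex_le (qg_seq q (qg_rem q x (Suc n))) (qg_seq q 1)"
    using qg_rem_bounds[OF q x, of "Suc n"] qg_rem_le_1[OF q x n] Jmax_ge_1[OF q]
    by (intro qg_seq_lex_mono q) auto
  then show ?thesis unfolding qg_seq_shift[symmetric] .
qed

lemma expansion_lex_le_qg_seq:
  assumes q: "q > 1" and c: "\<And>i. c i \<le> digmax q" and y: "0 < expval q c"
    and inf: "\<And>N. \<exists>i\<ge>N. c i > 0"
  shows "lex_le c (qg_seq q (expval q c))"
proof (rule ccontr)
  let ?y = "expval q c" and ?g = "qg_seq q (expval q c)"
  have yJ: "?y \<le> Jmax q" using expval_le_Jmax[OF q c] .
  assume "\<not> ?thesis"
  then obtain k where k: "\<forall>i<k. c i = ?g i" "?g k < c k" using not_lex_le by blast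
  obtain j where j: "j \<ge> Suc k" "c j > 0" using inf by blast
  have "0 < expval q (\<lambda>i. c (Suc k + i))"
    using expval_pos[of q "\<lambda>i. c (Suc k + i)" "j - Suc k", OF q] c j by simp
  moreover have "real (c k) + expval q (\<lambda>i. c (Suc k + i)) = real (?g k) + qg_rem q ?y (Suc k)"
    using expval_digit_tail_eq[of q c ?g, OF q c qg_seq_le_digmax[OF q y yJ] _ k(1)]
      expval_qg_seq[OF q y yJ] expval_qg_seq_tail[OF q y yJ, of "Suc k"] by simp
  moreover have "real (?g k) + qg_rem q ?y (Suc k) = q * qg_rem q ?y k"
    by (simp add: qg_seq_def)
  ultimately have "real (c k) < q * qg_rem q ?y k" by linarith
  then have "c k \<le> ?g k" unfolding qg_seq_def by (intro qg_digit_greatest c)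
  then show False using k(2) by simp
qed

lemma alpha_lex_strict_mono:
  assumes q: "q > 1" and qr: "q < r" and m: "digmax r = digmax q"
  shows "lex_le (qg_seq q 1) (qg_seq r 1)" and "qg_seq q 1 \<noteq> qg_seq r 1"
proof -
  let ?a = "qg_seq q 1"
  have r: "r > 1" using q qr by simp
  have q1: "0 < (1::real)" "1 \<le> Jmax q" using Jmax_ge_1[OF q] by auto
  have aq: "\<And>i. ?a i \<le> digmax q" using qg_seq_le_digmax[OF q q1] .
  then have ar: "\<And>i. ?a i \<le> digmax r" using m by simp
  have a0: "?a 0 > 0" using qg_digit_1[OF q] digmax_bounds(3)[OF q] by (simp add: qg_seq_def)
  have y: "0 < expval r ?a" using expval_pos[of r ?a 0, OF r ar a0] .
  have y1: "expval r ?a < 1"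
    using expval_larger_base(3)[of q r ?a 0, OF q qr m aq a0] expval_qg_seq[OF q q1] by simp
  have inf: "\<exists>i\<ge>N. ?a i > 0" for N
  proof (rule ccontr)
    assume "\<not> ?thesis"
    then have "expval q (\<lambda>i. ?a (N + i)) = 0" by (simp add: expval_def)
    then show False using expval_qg_seq_tail[OF q q1, of N] qg_rem_bounds[OF q q1, of N] by simp
  qed
  have "lex_le ?a (qg_seq r (expval r ?a))" by (rule expansion_lex_le_qg_seq[OF r ar y inf])
  moreover have "lex_le (qg_seq r (expval r ?a)) (qg_seq r 1)"
    using y y1 Jmax_ge_1[OF r] by (intro qg_seq_lex_mono r) auto
  ultimately show "lex_le ?a (qg_seq r 1)" by (rule lex_le_trans)
  show "?a \<noteq> qg_seq r 1"
  proof
    assume "?a = qg_seq r 1"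
    then show False using y1 expval_qg_seq[OF r _ Jmax_ge_1[OF r]] by simp
  qed
qed

section \<open>Parry's criterion\<close>

definition parry_cond :: "real \<Rightarrow> (nat \<Rightarrow> nat) \<Rightarrow> bool" where
  "parry_cond q b \<longleftrightarrow> (\<forall>i. b i \<le> digmax q) \<and> lex_le b (qg_seq q 1) \<and>
     (\<forall>j. b j < digmax q \<longrightarrow> lex_le (\<lambda>i. b (Suc j + i)) (qg_seq q 1))"

lemma parry_cond_tail:
  "parry_cond q b \<Longrightarrow> b k < digmax q \<Longrightarrow> parry_cond q (\<lambda>i. b (Suc k + i))"
  unfolding parry_cond_def by (auto simp: add.assoc)

lemma expval_lt_if_lex_lt_alpha:
  assumes q: "q > 1" and b: "\<And>i. b i \<le> digmax q"
    and k: "\<forall>i<k. b i = qg_seq q 1 i" "b k < qg_seq q 1 k"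
  shows "expval q b < 1 - 1 / q ^ Suc k + expval q (\<lambda>i. b (Suc k + i)) / q ^ Suc k"
proof -
  have q1: "0 < (1::real)" "1 \<le> Jmax q" using Jmax_ge_1[OF q] by auto
  have "(\<Sum>i<Suc k. real (b i) / q ^ Suc i)
      = (\<Sum>i<k. real (qg_seq q 1 i) / q ^ Suc i) + real (b k) / q ^ Suc k"
    using k by simp
  also have "\<dots> \<le> (\<Sum>i<k. real (qg_seq q 1 i) / q ^ Suc i) + (real (qg_seq q 1 k) - 1) / q ^ Suc k"
    using k q by (intro add_left_mono divide_right_mono) auto
  also have "\<dots> = 1 - qg_rem q 1 (Suc k) / q ^ Suc k - 1 / q ^ Suc k"
    using qg_seq_partial_sum[OF q, of 1 "Suc k"] by (simp add: diff_divide_distrib)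
  also have "\<dots> < 1 - 1 / q ^ Suc k"
    using qg_rem_bounds[OF q q1, of "Suc k"] q by simp
  finally show ?thesis using expval_split[of q b "Suc k", OF q b] by simp
qed

lemma expval_ge_if_lex_gt_alpha:
  assumes q: "q > 1" and b: "\<And>i. b i \<le> digmax q"
    and k: "\<forall>i<k. b i = qg_seq q 1 i" "qg_seq q 1 k < b k"
  shows "1 + expval q (\<lambda>i. b (Suc k + i)) / q ^ Suc k \<le> expval q b"
proof -
  have q1: "0 < (1::real)" "1 \<le> Jmax q" using Jmax_ge_1[OF q] by auto
  have "1 \<le> 1 - qg_rem q 1 (Suc k) / q ^ Suc k + 1 / q ^ Suc k"
    using qg_rem_le_1[OF q q1, of k] k(2) b[of k] q by (simp add: divide_right_mono)
  also have "\<dots> = (\<Sum>i<k. real (qg_seq q 1 i) / q ^ Suc i) + (real (qg_seq q 1 k) + 1) / q ^ Suc k"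
    using qg_seq_partial_sum[OF q, of 1 "Suc k"] by (simp add: add_divide_distrib)
  also have "\<dots> \<le> (\<Sum>i<k. real (qg_seq q 1 i) / q ^ Suc i) + real (b k) / q ^ Suc k"
    using k q by (intro add_left_mono divide_right_mono) auto
  also have "\<dots> = (\<Sum>i<Suc k. real (b i) / q ^ Suc i)"
    using k by simp
  finally show ?thesis using expval_split[of q b "Suc k", OF q b] by simp
qed

lemma parry_cond_expval_le:
  assumes q: "q > 1"
  shows "parry_cond q b \<Longrightarrow> expval q b \<le> 1 + Jmax q / q ^ N"
proof (induction N arbitrary: b)
  case 0
  then show ?case using expval_le_Jmax[OF q, of b] unfolding parry_cond_def by simp
next
  case (Suc N)
  have q1: "0 < (1::real)" "1 \<le> Jmax q" using Jmax_ge_1[OF q] by auto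
  have b: "\<And>i. b i \<le> digmax q" using Suc.prems unfolding parry_cond_def by auto
  show ?case
  proof (cases "b = qg_seq q 1")
    case True
    then have "expval q b = 1" using expval_qg_seq[OF q q1] by simp
    moreover have "0 \<le> Jmax q / q ^ Suc N" using q q1 by simp
    ultimately show ?thesis by simp
  next
    case False
    then obtain k where k: "\<forall>i<k. b i = qg_seq q 1 i" "b k < qg_seq q 1 k"
      using Suc.prems unfolding parry_cond_def lex_le_def by blast
    have "b k < digmax q" using k qg_seq_le_digmax[OF q q1, of k] by simp
    then have IH: "expval q (\<lambda>i. b (Suc k + i)) \<le> 1 + Jmax q / q ^ N"
      using Suc.IH parry_cond_tail[OF Suc.prems] by blast
    have "expval q b < 1 - 1 / q ^ Suc k + expval q (\<lambda>i. b (Suc k + i)) / q ^ Suc k"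
      by (rule expval_lt_if_lex_lt_alpha[OF q b k])
    also have "\<dots> \<le> 1 - 1 / q ^ Suc k + (1 + Jmax q / q ^ N) / q ^ Suc k"
      using IH q by (simp add: divide_right_mono)
    also have "\<dots> = 1 + Jmax q / (q ^ N * q ^ Suc k)" using q by (simp add: field_simps)
    also have "\<dots> \<le> 1 + Jmax q / q ^ Suc N"
    proof -
      have "q ^ Suc N \<le> q ^ N * q ^ Suc k" using q by (simp add: power_increasing mult_left_mono)
      then show ?thesis using q q1 by (simp add: frac_le)
    qed
    finally show ?thesis by simp
  qed
qed

lemma parry_cond_expval_le_1:
  assumes q: "q > 1" and b: "parry_cond q b"
  shows "expval q b \<le> 1"
proof (rule ccontr)
  assume "\<not> ?thesis"
  then have pos: "(expval q b - 1) / Jmax q > 0" using Jmax_ge_1[OF q] by simp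
  obtain N where N: "(1/q) ^ N < (expval q b - 1) / Jmax q"
    using real_arch_pow_inv[OF pos, of "1/q"] q by auto
  have "Jmax q / q ^ N = Jmax q * (1/q) ^ N" by (simp add: power_divide)
  also have "\<dots> < expval q b - 1" using N Jmax_ge_1[OF q] by (simp add: field_simps)
  finally show False using parry_cond_expval_le[OF q b, of N] by simp
qed

lemma parry_cond_expval_less_1:
  assumes q: "q > 1" and b: "parry_cond q b" and ne: "b \<noteq> qg_seq q 1"
  shows "expval q b < 1"
proof -
  have q1: "0 < (1::real)" "1 \<le> Jmax q" using Jmax_ge_1[OF q] by auto
  have bq: "\<And>i. b i \<le> digmax q" using b unfolding parry_cond_def by auto
  obtain k where k: "\<forall>i<k. b i = qg_seq q 1 i" "b k < qg_seq q 1 k"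
    using b ne unfolding parry_cond_def lex_le_def by blast
  have "b k < digmax q" using k qg_seq_le_digmax[OF q q1, of k] by simp
  then have "expval q (\<lambda>i. b (Suc k + i)) \<le> 1"
    using parry_cond_expval_le_1[OF q parry_cond_tail[OF b]] by blast
  then have "expval q (\<lambda>i. b (Suc k + i)) / q ^ Suc k \<le> 1 / q ^ Suc k"
    using q by (simp add: divide_right_mono)
  then show ?thesis using expval_lt_if_lex_lt_alpha[OF q bq k] by simp
qed

lemma parry_cond_larger_base:
  assumes q: "q > 1" and b: "parry_cond q b" and qr: "q < r" and m: "digmax r = digmax q"
  shows "expval r b < 1"
proof -
  have r: "r > 1" using q qr by simp
  have le: "lex_le s (qg_seq r 1)" and ne: "s \<noteq> qg_seq r 1" if "lex_le s (qg_seq q 1)" for s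
  proof -
    show "lex_le s (qg_seq r 1)" using that alpha_lex_strict_mono(1)[OF q qr m] by (rule lex_le_trans)
    show "s \<noteq> qg_seq r 1"
      using that alpha_lex_strict_mono[OF q qr m] lex_le_antisym by blast
  qed
  have "parry_cond r b" using b le unfolding parry_cond_def m by blast
  moreover have "b \<noteq> qg_seq r 1" using b ne unfolding parry_cond_def by blast
  ultimately show ?thesis by (rule parry_cond_expval_less_1[OF r])
qed

lemma parry_cond_qg_seq_tail:
  assumes q: "q > 1" and x: "0 < x" "x \<le> Jmax q" and n: "qg_seq q x n < digmax q"
  shows "parry_cond q (\<lambda>i. qg_seq q x (Suc n + i))"
  unfolding parry_cond_def
proof (intro conjI allI impI)
  show "qg_seq q x (Suc n + i) \<le> digmax q" for i using qg_seq_le_digmax[OF q x] .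
  show "lex_le (\<lambda>i. qg_seq q x (Suc n + i)) (qg_seq q 1)" by (rule qg_seq_tail_lex_le_alpha[OF q x n])
  fix j assume "qg_seq q x (Suc n + j) < digmax q"
  from qg_seq_tail_lex_le_alpha[OF q x this]
  show "lex_le (\<lambda>i. qg_seq q x (Suc n + (Suc j + i))) (qg_seq q 1)" by (simp add: add.assoc)
qed

section \<open>Unique expansions\<close>

lemma in_setU_if_tail_bounds:
  assumes q: "q > 1" and c: "\<And>i. c i \<le> digmax q"
    and nonmax: "\<And>n. c n < digmax q \<Longrightarrow> expval q (\<lambda>i. c (Suc n + i)) < 1"
    and nonzero: "\<And>n. 0 < c n \<Longrightarrow> Jmax q - 1 < expval q (\<lambda>i. c (Suc n + i))"
  shows "(expval q c, q) \<in> setU"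
proof -
  have "d = c" if d: "is_expansion (expval q c) q d" for d
  proof (rule ccontr)
    assume "d \<noteq> c"
    have dq: "\<And>i. d i \<le> digmax q" and "expval q d = expval q c"
      using d expval_eqI unfolding is_expansion_def by auto
    then have tails: "real (c n) + expval q (\<lambda>i. c (Suc n + i)) = real (d n) + expval q (\<lambda>i. d (Suc n + i))"
      if "\<forall>i<n. c i = d i" for n
      using expval_digit_tail_eq[of q c d, OF q c dq _ that] by simp
    have d_tail: "0 \<le> expval q (\<lambda>i. d (Suc n + i))" "expval q (\<lambda>i. d (Suc n + i)) \<le> Jmax q" for n
      using expval_nonneg[of q "\<lambda>i. d (Suc n + i)", OF q] expval_le_Jmax[of q "\<lambda>i. d (Suc n + i)", OF q] dq
      by auto
    consider n where "\<forall>i<n. c i = d i" "c n < d n" | n where "\<forall>i<n. c i = d i" "d n < c n"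
      using \<open>d \<noteq> c\<close> not_lex_le[of d c] unfolding lex_le_def by (metis (full_types))
    then show False
    proof cases
      case 1
      then have "expval q (\<lambda>i. c (Suc n + i)) < 1" using nonmax dq[of n] by simp
      then show False using tails[OF 1(1)] 1(2) d_tail[of n] by linarith
    next
      case 2
      then have "Jmax q - 1 < expval q (\<lambda>i. c (Suc n + i))" using nonzero by simp
      then show False using tails[OF 2(1)] 2(2) d_tail[of n] by linarith
    qed
  qed
  then show ?thesis
    unfolding setU_def setJ_iff using q is_expansion_expval[of q c, OF q c]
      expval_nonneg[of q c, OF q c] expval_le_Jmax[of q c, OF q c]
    by auto
qed

lemma exists_expansion:
  assumes "q > 1" "0 \<le> y" "y \<le> Jmax q"
  shows "\<exists>c. is_expansion y q c"
proof (cases "y = 0")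
  case True
  then show ?thesis by (auto simp: is_expansion_def intro!: exI[of _ "\<lambda>_. 0"])
next
  case False
  then show ?thesis using assms qg_seq_le_digmax qg_seq_sums
    unfolding is_expansion_def by (intro exI[of _ "qg_seq q y"]) auto
qed

lemma expansion_with_digit:
  assumes q: "q > 1" and x: "0 < x" "x \<le> Jmax q" and d: "d \<le> digmax q"
    and y: "0 \<le> y" "y \<le> Jmax q" and dy: "real d + y = real (qg_seq q x n) + qg_rem q x (Suc n)"
  shows "\<exists>e. is_expansion x q e \<and> e n = d"
proof -
  obtain E where E: "is_expansion y q E" using exists_expansion[OF q y] ..
  define e where "e i = (if i < n then qg_seq q x i else if i = n then d else E (i - Suc n))" for i
  have e: "\<And>i. e i \<le> digmax q" using E d qg_seq_le_digmax[OF q x] unfolding e_def is_expansion_def by auto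
  have "(\<Sum>i<n. real (e i) / q ^ Suc i) = (\<Sum>i<n. real (qg_seq q x i) / q ^ Suc i)"
    unfolding e_def by (intro sum.cong) auto
  moreover have "expval q (\<lambda>i. e (Suc n + i)) = y"
    using E expval_eqI unfolding e_def is_expansion_def by simp
  ultimately have "expval q e = (\<Sum>i<n. real (qg_seq q x i) / q ^ Suc i) + (real d + y) / q ^ Suc n"
    using expval_split[of q e "Suc n", OF q e] by (simp add: e_def add_divide_distrib)
  also have "\<dots> = x"
    using qg_seq_partial_sum[OF q, of x "Suc n"] unfolding dy by (simp add: add_divide_distrib)
  finally show ?thesis using is_expansion_expval[of q e, OF q e] by (intro exI[of _ e]) (simp add: e_def)
qed

lemma setU_rem_gt:
  assumes U: "(x, q) \<in> setU" and x: "0 < x" and n: "0 < qg_seq q x n"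
  shows "Jmax q - 1 < qg_rem q x (Suc n)"
proof (rule ccontr)
  have q: "q > 1" and xJ: "x \<le> Jmax q" using U unfolding setU_def setJ_iff by auto
  assume "\<not> ?thesis"
  then have "\<exists>e. is_expansion x q e \<and> e n = qg_seq q x n - 1"
    using qg_seq_le_digmax[OF q x xJ, of n] qg_rem_bounds[OF q x xJ, of "Suc n"] n
    by (intro expansion_with_digit[OF q x xJ, where y = "qg_rem q x (Suc n) + 1"]) (auto simp: of_nat_diff)
  moreover have "is_expansion x q (qg_seq q x)"
    using qg_seq_le_digmax[OF q x xJ] qg_seq_sums[OF q x xJ] unfolding is_expansion_def by blast
  ultimately have "qg_seq q x n = qg_seq q x n - 1" using U unfolding setU_def by auto
  then show False using n by simp
qed

lemma zero_in_setU:
  assumes q: "q > 1" shows "(0, q) \<in> setU"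
proof -
  have "d = (\<lambda>_. 0)" if d: "is_expansion 0 q d" for d
  proof -
    have s: "(\<lambda>i. real (d i) / q ^ Suc i) sums 0" using d unfolding is_expansion_def by auto
    then have "\<forall>i. real (d i) / q ^ Suc i = 0"
      using suminf_eq_zero_iff[OF sums_summable[OF s]] sums_unique[OF s] q by simp
    then show ?thesis using q by auto
  qed
  moreover have "is_expansion 0 q (\<lambda>_. 0)" unfolding is_expansion_def by simp
  ultimately show ?thesis unfolding setU_def setJ_iff using q Jmax_ge_1[OF q] by auto
qed

section \<open>Necessity of the condition\<close>

lemma eventually_digmax_eq:
  assumes "of_int \<lceil>q\<rceil> \<noteq> q" "qk \<longlonglongrightarrow> q"
  shows "\<forall>\<^sub>F k in sequentially. digmax (qk k) = digmax q"
proof -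
  have "q < of_int \<lceil>q\<rceil>" using assms(1) le_of_int_ceiling[of q] by linarith
  moreover have "of_int \<lceil>q\<rceil> - 1 < q" using ceiling_correct[of q] by linarith
  ultimately have "\<forall>\<^sub>F k in sequentially. of_int \<lceil>q\<rceil> - 1 < qk k \<and> qk k < of_int \<lceil>q\<rceil>"
    using order_tendstoD[OF assms(2)] by (simp add: eventually_conj_iff)
  then show ?thesis
  proof eventually_elim
    case (elim k)
    then have "\<lceil>qk k\<rceil> = \<lceil>q\<rceil>" by (intro ceiling_unique) auto
    then show ?case unfolding digmax_def by simp
  qed
qed

lemma Jmax_tendsto:
  assumes "q > 1" "of_int \<lceil>q\<rceil> \<noteq> q" "qk \<longlonglongrightarrow> q"
  shows "(\<lambda>k. Jmax (qk k)) \<longlonglongrightarrow> Jmax q"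
proof -
  have "(\<lambda>k. real (digmax q) / (qk k - 1)) \<longlonglongrightarrow> Jmax q"
    unfolding Jmax_def using assms(1) by (intro tendsto_divide tendsto_const tendsto_diff assms(3)) auto
  moreover have "\<forall>\<^sub>F k in sequentially. real (digmax q) / (qk k - 1) = Jmax (qk k)"
    using eventually_digmax_eq[OF assms(2,3)] by eventually_elim (simp add: Jmax_def)
  ultimately show ?thesis by (rule Lim_transform_eventually)
qed

text \<open>Where \<open>q r = D + 1\<close>, nearby digits may be \<open>D + 1\<close>, leaving remainders close to 0. The
  remainder bound, which holds in \<open>U\<close>, excludes this because \<open>Jmax q > 1\<close> for non-integer \<open>q\<close>.\<close>

lemma qg_digit_eventually_le_at_jump:
  fixes qk rk :: "nat \<Rightarrow> real"
  assumes q: "q > 1" "of_int \<lceil>q\<rceil> \<noteq> q" and qk: "qk \<longlonglongrightarrow> q"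
    and prod: "(\<lambda>k. qk k * rk k) \<longlonglongrightarrow> real D + 1"
    and bound: "\<forall>\<^sub>F k in sequentially. qk k > 1 \<and> rk k > 0 \<and>
      (0 < qg_digit (qk k) (rk k) \<longrightarrow> Jmax (qk k) - 1 < qk k * rk k - real (qg_digit (qk k) (rk k)))"
  shows "\<forall>\<^sub>F k in sequentially. qg_digit (qk k) (rk k) \<le> D"
proof -
  have "Jmax q \<noteq> 1" using Jmax_eq_1_iff[OF q(1)] q(2) by simp
  have "(\<lambda>k. qk k * rk k - real (D + 1)) \<longlonglongrightarrow> 0"
    using tendsto_diff[OF prod tendsto_const[of "real (D + 1)"]] by simp
  then have "(\<lambda>k. Jmax (qk k) - 1 - (qk k * rk k - real (D + 1))) \<longlonglongrightarrow> Jmax q - 1 - 0"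
    by (intro tendsto_diff Jmax_tendsto[OF q qk] tendsto_const)
  moreover have "0 < Jmax q - 1 - 0" using \<open>Jmax q \<noteq> 1\<close> Jmax_ge_1[OF q(1)] by simp
  ultimately have "\<forall>\<^sub>F k in sequentially. 0 < Jmax (qk k) - 1 - (qk k * rk k - real (D + 1))"
    by (rule order_tendstoD(1))
  moreover have "\<forall>\<^sub>F k in sequentially. qk k * rk k < real D + 2"
    using order_tendstoD(2)[OF prod] by simp
  ultimately show ?thesis using bound
  proof eventually_elim
    case (elim k)
    then have "qg_digit (qk k) (rk k) < D + 2" using qg_digit_bounds(2)[of "qk k" "rk k"] by simp
    moreover have "qg_digit (qk k) (rk k) \<noteq> D + 1" using elim by auto
    ultimately show ?case by simp
  qed
qed

lemma qg_digit_eventually_eq: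
  fixes qk rk :: "nat \<Rightarrow> real"
  assumes q: "q > 1" "of_int \<lceil>q\<rceil> \<noteq> q" and qk: "qk \<longlonglongrightarrow> q" and rk: "rk \<longlonglongrightarrow> r" and r: "r > 0"
    and bound: "\<forall>\<^sub>F k in sequentially. qk k > 1 \<and> rk k > 0 \<and>
      (0 < qg_digit (qk k) (rk k) \<longrightarrow> Jmax (qk k) - 1 < qk k * rk k - real (qg_digit (qk k) (rk k)))"
  shows "\<forall>\<^sub>F k in sequentially. qg_digit (qk k) (rk k) = qg_digit q r"
proof -
  define D where "D = qg_digit q r"
  have prod: "(\<lambda>k. qk k * rk k) \<longlonglongrightarrow> q * r" by (intro tendsto_mult qk rk)
  have D: "D \<le> digmax q" "real D < q * r" unfolding D_def using qg_digit_bounds[OF q(1) r] by auto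
  have dm: "\<forall>\<^sub>F k in sequentially. digmax (qk k) = digmax q" by (rule eventually_digmax_eq[OF q(2) qk])
  have "\<forall>\<^sub>F k in sequentially. D \<le> qg_digit (qk k) (rk k)"
    using order_tendstoD(1)[OF prod D(2)] dm by eventually_elim (use D(1) in \<open>auto intro: qg_digit_greatest\<close>)
  moreover have "\<forall>\<^sub>F k in sequentially. qg_digit (qk k) (rk k) \<le> D"
  proof (cases "D = digmax q")
    case True
    show ?thesis using bound dm
    proof eventually_elim
      case (elim k)
      then show ?case using qg_digit_bounds(1)[of "qk k" "rk k"] True by simp
    qed
  next
    case False
    then have "q * r \<le> real D + 1" using qg_digit_nonmax[OF q(1) r] D(1) unfolding D_def by simp
    then consider "q * r < real D + 1" | "q * r = real D + 1" by linarith
    then show ?thesis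
    proof cases
      case 1
      show ?thesis using order_tendstoD(2)[OF prod 1] bound
        by eventually_elim (use qg_digit_bounds(2) in \<open>fastforce\<close>)
    next
      case 2
      show ?thesis using prod unfolding 2 by (rule qg_digit_eventually_le_at_jump[OF q qk _ bound])
    qed
  qed
  ultimately show ?thesis unfolding D_def by eventually_elim simp
qed

context
  fixes x q :: real and xk qk :: "nat \<Rightarrow> real"
  assumes q: "q > 1" "of_int \<lceil>q\<rceil> \<noteq> q" and x: "0 < x" "x \<le> Jmax q"
    and U: "\<And>k. (xk k, qk k) \<in> setU" and xk: "xk \<longlonglongrightarrow> x" and qk: "qk \<longlonglongrightarrow> q"
begin

lemma setU_qg_seq_eventually_eq:
  assumes rem: "(\<lambda>k. qg_rem (qk k) (xk k) n) \<longlonglongrightarrow> qg_rem q x n"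
  shows "\<forall>\<^sub>F k in sequentially. qg_seq (qk k) (xk k) n = qg_seq q x n"
  unfolding qg_seq_def
proof (rule qg_digit_eventually_eq[OF q qk rem])
  show "0 < qg_rem q x n" using qg_rem_bounds[OF q(1) x] by blast
  show "\<forall>\<^sub>F k in sequentially. qk k > 1 \<and> qg_rem (qk k) (xk k) n > 0 \<and>
      (0 < qg_digit (qk k) (qg_rem (qk k) (xk k) n) \<longrightarrow>
       Jmax (qk k) - 1 < qk k * qg_rem (qk k) (xk k) n - real (qg_digit (qk k) (qg_rem (qk k) (xk k) n)))"
    using order_tendstoD(1)[OF xk x(1)]
  proof eventually_elim
    case (elim k)
    have "qk k > 1" "xk k \<le> Jmax (qk k)" using U[of k] unfolding setU_def setJ_iff by auto
    then show ?case using setU_rem_gt[OF U elim, of n] qg_rem_bounds[of "qk k" "xk k" n] elim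
      by (simp add: qg_seq_def)
  qed
qed

lemma setU_qg_rem_tendsto: "(\<lambda>k. qg_rem (qk k) (xk k) n) \<longlonglongrightarrow> qg_rem q x n"
proof (induction n)
  case 0
  then show ?case using xk by simp
next
  case (Suc n)
  have "(\<lambda>k. qk k * qg_rem (qk k) (xk k) n - real (qg_seq q x n)) \<longlonglongrightarrow> qg_rem q x (Suc n)"
    using tendsto_diff[OF tendsto_mult[OF qk Suc.IH] tendsto_const] by (simp add: qg_seq_def)
  moreover have "\<forall>\<^sub>F k in sequentially.
      qk k * qg_rem (qk k) (xk k) n - real (qg_seq q x n) = qg_rem (qk k) (xk k) (Suc n)"
    using setU_qg_seq_eventually_eq[OF Suc.IH] by eventually_elim (simp add: qg_seq_def)
  ultimately show ?case by (rule Lim_transform_eventually)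
qed

lemma setU_limit_rem_ge:
  assumes n: "0 < qg_seq q x n"
  shows "Jmax q - 1 \<le> qg_rem q x (Suc n)"
proof (rule tendsto_le[OF trivial_limit_sequentially setU_qg_rem_tendsto])
  show "(\<lambda>k. Jmax (qk k) - 1) \<longlonglongrightarrow> Jmax q - 1" by (intro tendsto_diff Jmax_tendsto[OF q qk] tendsto_const)
  show "\<forall>\<^sub>F k in sequentially. Jmax (qk k) - 1 \<le> qg_rem (qk k) (xk k) (Suc n)"
    using setU_qg_seq_eventually_eq[OF setU_qg_rem_tendsto[of n]] order_tendstoD(1)[OF xk x(1)]
    by eventually_elim (use n setU_rem_gt[OF U] in \<open>auto intro: less_imp_le\<close>)
qed

end

lemma closure_setU_rem_ge:
  assumes J: "(x, q) \<in> setJ" and x: "0 < x" and cl: "(x, q) \<in> closure setU"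
    and n: "0 < qg_seq q x n"
  shows "Jmax q - 1 \<le> qg_rem q x (Suc n)"
proof -
  have q: "q > 1" and xJ: "x \<le> Jmax q" using J setJ_iff by auto
  show ?thesis
  proof (cases "of_int \<lceil>q\<rceil> = q")
    case True
    then show ?thesis using Jmax_eq_1_iff[OF q] qg_rem_bounds[OF q x xJ, of "Suc n"] by simp
  next
    case False
    obtain s where s: "\<And>k. s k \<in> setU" "s \<longlonglongrightarrow> (x, q)"
      using cl unfolding closure_sequential by blast
    have "(fst (s k), snd (s k)) \<in> setU" for k using s(1) by simp
    moreover have "(\<lambda>k. fst (s k)) \<longlonglongrightarrow> x" "(\<lambda>k. snd (s k)) \<longlonglongrightarrow> q"
      using tendsto_fst[OF s(2)] tendsto_snd[OF s(2)] by simp_all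
    ultimately show ?thesis by (rule setU_limit_rem_ge[OF q False x xJ _ _ _ n])
  qed
qed

lemma conj_tail_lex_le_alpha_if_rem_ge:
  assumes q: "q > 1" and x: "0 < x" "x \<le> Jmax q" and rem: "Jmax q - 1 \<le> qg_rem q x (Suc n)"
  shows "lex_le (\<lambda>i. digmax q - qg_seq q x (Suc n + i)) (qg_seq q 1)"
proof (rule ccontr)
  define b where "b i = digmax q - qg_seq q x (Suc n + i)" for i
  assume "\<not> ?thesis"
  then obtain k where k: "\<forall>i<k. b i = qg_seq q 1 i" "qg_seq q 1 k < b k"
    using not_lex_le unfolding b_def by blast
  have b_tail: "expval q (\<lambda>i. b (m + i)) = Jmax q - qg_rem q x (Suc n + m)" for m
    using expval_conj_qg_seq_tail[OF q x, of "Suc n + m"] unfolding b_def by (simp add: add.assoc)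
  have "qg_seq q x (Suc n + k) < digmax q" using k(2) unfolding b_def by simp
  then have "qg_rem q x (Suc n + Suc k) \<le> 1" using qg_rem_le_1[OF q x, of "Suc n + k"] by simp
  then have tail: "Jmax q - 1 \<le> expval q (\<lambda>i. b (Suc k + i))" using b_tail[of "Suc k"] by simp
  have ge: "1 + expval q (\<lambda>i. b (Suc k + i)) / q ^ Suc k \<le> expval q b"
    by (rule expval_ge_if_lex_gt_alpha[OF q _ k]) (simp add: b_def)
  have "0 \<le> expval q (\<lambda>i. b (Suc k + i))" using tail Jmax_ge_1[OF q] by simp
  then have "0 \<le> expval q (\<lambda>i. b (Suc k + i)) / q ^ Suc k" using q by simp
  moreover have "expval q b = Jmax q - qg_rem q x (Suc n)" using b_tail[of 0] by simp
  ultimately have "expval q (\<lambda>i. b (Suc k + i)) / q ^ Suc k = 0" and "qg_rem q x (Suc n) = Jmax q - 1"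
    using ge rem by linarith+
  then have "Jmax q \<le> 1" using tail q by simp
  then show False using \<open>qg_rem q x (Suc n) = Jmax q - 1\<close> qg_rem_bounds[OF q x, of "Suc n"] by simp
qed

section \<open>Sufficiency of the condition\<close>

definition conj_tail_cond :: "real \<Rightarrow> real \<Rightarrow> bool" where
  "conj_tail_cond q x \<longleftrightarrow>
     (\<forall>n. 0 < qg_seq q x n \<longrightarrow> lex_le (\<lambda>i. digmax q - qg_seq q x (Suc n + i)) (qg_seq q 1))"

lemma parry_cond_conj_tail:
  assumes C: "conj_tail_cond q x" and n: "0 < qg_seq q x n"
  shows "parry_cond q (\<lambda>i. digmax q - qg_seq q x (Suc n + i))"
  unfolding parry_cond_def
proof (intro conjI allI impI)
  show "digmax q - qg_seq q x (Suc n + i) \<le> digmax q" for i by simp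
  show "lex_le (\<lambda>i. digmax q - qg_seq q x (Suc n + i)) (qg_seq q 1)"
    using C n unfolding conj_tail_cond_def by blast
  fix j assume "digmax q - qg_seq q x (Suc n + j) < digmax q"
  then have "0 < qg_seq q x (Suc n + j)" by simp
  then have "lex_le (\<lambda>i. digmax q - qg_seq q x (Suc (Suc n + j) + i)) (qg_seq q 1)"
    using C unfolding conj_tail_cond_def by blast
  then show "lex_le (\<lambda>i. digmax q - qg_seq q x (Suc n + (Suc j + i))) (qg_seq q 1)"
    by (simp add: add.assoc)
qed

lemma in_setU_larger_base:
  assumes q: "q > 1" and qr: "q < r" and m: "digmax r = digmax q"
    and x: "0 < x" "x \<le> Jmax q" and C: "conj_tail_cond q x"
  shows "(expval r (qg_seq q x), r) \<in> setU"
proof (rule in_setU_if_tail_bounds)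
  show r: "r > 1" using q qr by simp
  show "qg_seq q x i \<le> digmax r" for i using qg_seq_le_digmax[OF q x] m by simp
  show "expval r (\<lambda>i. qg_seq q x (Suc n + i)) < 1" if "qg_seq q x n < digmax r" for n
    using parry_cond_larger_base[OF q parry_cond_qg_seq_tail[OF q x] qr m] that m by simp
  show "Jmax r - 1 < expval r (\<lambda>i. qg_seq q x (Suc n + i))" if "0 < qg_seq q x n" for n
  proof -
    have "expval r (\<lambda>i. digmax q - qg_seq q x (Suc n + i)) < 1"
      by (rule parry_cond_larger_base[OF q parry_cond_conj_tail[OF C that] qr m])
    moreover have "expval r (\<lambda>i. digmax q - qg_seq q x (Suc n + i))
        = Jmax r - expval r (\<lambda>i. qg_seq q x (Suc n + i))"
      using expval_conj[of r "\<lambda>i. qg_seq q x (Suc n + i)", OF r] qg_seq_le_digmax[OF q x] m by simp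
    ultimately show ?thesis by simp
  qed
qed

lemma larger_bases_tendsto:
  assumes "of_int \<lceil>q\<rceil> \<noteq> q"
  obtains r where "\<And>k. q < r k" "\<And>k. digmax (r k) = digmax q" "r \<longlonglongrightarrow> q"
proof
  define \<delta> where "\<delta> = of_int \<lceil>q\<rceil> - q"
  have \<delta>: "\<delta> > 0" unfolding \<delta>_def using assms le_of_int_ceiling[of q] by linarith
  show "q < q + \<delta> / real (k + 2)" for k using \<delta> by simp
  show "digmax (q + \<delta> / real (k + 2)) = digmax q" for k
  proof -
    have "0 < \<delta> / real (k + 2)" "\<delta> / real (k + 2) < \<delta>" using \<delta> by (simp_all add: divide_less_eq)
    then have "\<lceil>q + \<delta> / real (k + 2)\<rceil> = \<lceil>q\<rceil>"
      using ceiling_correct[of q] \<delta>_def by (intro ceiling_unique) auto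
    then show ?thesis unfolding digmax_def by simp
  qed
  have "(\<lambda>k. \<delta> / real (k + 2)) \<longlonglongrightarrow> 0"
    using LIMSEQ_ignore_initial_segment[OF lim_const_over_n[of \<delta>], of 2] by simp
  then show "(\<lambda>k. q + \<delta> / real (k + 2)) \<longlonglongrightarrow> q"
    using tendsto_add[OF tendsto_const[of q]] by fastforce
qed

lemma in_closure_setU_nonint:
  assumes q: "q > 1" "of_int \<lceil>q\<rceil> \<noteq> q" and x: "0 < x" "x \<le> Jmax q" and C: "conj_tail_cond q x"
  shows "(x, q) \<in> closure setU"
proof -
  obtain r where r: "\<And>k. q < r k" "\<And>k. digmax (r k) = digmax q" "r \<longlonglongrightarrow> q"
    using larger_bases_tendsto[OF q(2)] by blast
  let ?c = "qg_seq q x"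
  have c: "\<And>i. ?c i \<le> digmax q" using qg_seq_le_digmax[OF q(1) x] .
  have "(\<lambda>k. expval (r k) ?c) \<longlonglongrightarrow> x"
  proof (rule real_tendsto_sandwich)
    have "x - (Jmax q - Jmax (r k)) \<le> expval (r k) ?c" for k
      using expval_larger_base(2)[where r = "r k" and c = ?c, OF q(1) r(1,2) c] expval_qg_seq[OF q(1) x]
      by linarith
    then show "\<forall>\<^sub>F k in sequentially. x - (Jmax q - Jmax (r k)) \<le> expval (r k) ?c"
      by (intro always_eventually) auto
    have "expval (r k) ?c \<le> x" for k
      using expval_larger_base(1)[where r = "r k" and c = ?c, OF q(1) r(1,2) c] expval_qg_seq[OF q(1) x]
      by linarith
    then show "\<forall>\<^sub>F k in sequentially. expval (r k) ?c \<le> x"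
      by (intro always_eventually) auto
    have "(\<lambda>k. x - (Jmax q - Jmax (r k))) \<longlonglongrightarrow> x - (Jmax q - Jmax q)"
      by (intro tendsto_diff tendsto_const Jmax_tendsto[OF q r(3)])
    then show "(\<lambda>k. x - (Jmax q - Jmax (r k))) \<longlonglongrightarrow> x" by simp
  qed simp
  then have "(\<lambda>k. (expval (r k) ?c, r k)) \<longlonglongrightarrow> (x, q)" by (intro tendsto_Pair r(3))
  moreover have "(expval (r k) ?c, r k) \<in> setU" for k by (rule in_setU_larger_base[OF q(1) r(1,2) x C])
  ultimately show ?thesis
    unfolding closure_sequential by (intro exI[of _ "\<lambda>k. (expval (r k) ?c, r k)"]) auto
qed

lemma exists_irrational_between:
  fixes a b :: real assumes "a < b" shows "\<exists>y. a < y \<and> y < b \<and> y \<notin> \<rat>"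
proof (rule ccontr)
  assume "\<not> ?thesis"
  then have "{a<..<b} \<subseteq> \<rat>" by auto
  then have "countable {a<..<b}" using countable_rat countable_subset by blast
  then show False using uncountable_open_interval assms by blast
qed

text \<open>For integer \<open>q\<close> the remainders of \<open>y\<close> differ from \<open>q\<^sup>n y\<close> by integers, so they never
  equal 1 when \<open>y\<close> is irrational.\<close>

lemma irrational_in_setU:
  assumes q: "q > 1" "of_int \<lceil>q\<rceil> = q" and y: "0 < y" "y < 1" "y \<notin> \<rat>"
  shows "(y, q) \<in> setU"
proof -
  have J1: "Jmax q = 1" using Jmax_eq_1_iff q by simp
  then have yJ: "y \<le> Jmax q" using y by simp
  have qZ: "q \<in> \<int>" using q(2) by (metis Ints_of_int)
  have remZ: "qg_rem q y n - q ^ n * y \<in> \<int>" for n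
  proof (induction n)
    case (Suc n)
    have "qg_rem q y (Suc n) - q ^ Suc n * y = q * (qg_rem q y n - q ^ n * y) - real (qg_digit q (qg_rem q y n))"
      by (simp add: algebra_simps)
    also have "\<dots> \<in> \<int>" using Ints_mult[OF qZ Suc.IH] by (intro Ints_diff Ints_of_nat)
    finally show ?case .
  qed simp
  have rem_ne_1: "qg_rem q y n \<noteq> 1" for n
  proof
    assume "qg_rem q y n = 1"
    then have "q ^ n * y \<in> \<int>" using Ints_diff[OF Ints_1 remZ[of n]] by simp
    then have "(q ^ n * y) / q ^ n \<in> \<rat>"
      using qZ Ints_subset_Rats by (intro Rats_divide Rats_power) auto
    then show False using y(3) q(1) by simp
  qed
  have "(expval q (qg_seq q y), q) \<in> setU"
  proof (rule in_setU_if_tail_bounds[OF q(1) qg_seq_le_digmax[OF q(1) y(1) yJ]])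
    show "expval q (\<lambda>i. qg_seq q y (Suc n + i)) < 1" if "qg_seq q y n < digmax q" for n
      using qg_rem_le_1[OF q(1) y(1) yJ that] rem_ne_1[of "Suc n"] expval_qg_seq_tail[OF q(1) y(1) yJ, of "Suc n"]
      by simp
    show "Jmax q - 1 < expval q (\<lambda>i. qg_seq q y (Suc n + i))" for n
      using qg_rem_bounds[OF q(1) y(1) yJ, of "Suc n"] expval_qg_seq_tail[OF q(1) y(1) yJ, of "Suc n"] J1
      by simp
  qed
  then show ?thesis using expval_qg_seq[OF q(1) y(1) yJ] by simp
qed

lemma in_closure_setU_int:
  assumes J: "(x, q) \<in> setJ" and q: "of_int \<lceil>q\<rceil> = q"
  shows "(x, q) \<in> closure setU"
proof -
  have q1: "q > 1" and x: "0 \<le> x" "x \<le> Jmax q" using J unfolding setJ_iff by auto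
  have "Jmax q = 1" using Jmax_eq_1_iff[OF q1] q by simp
  define e where "e k = inverse (real (Suc k))" for k
  have e: "e k > 0" for k unfolding e_def by simp
  have "\<exists>y. max 0 (x - e k) < y \<and> y < min 1 (x + e k) \<and> y \<notin> \<rat>" for k
    using x \<open>Jmax q = 1\<close> e[of k] by (intro exists_irrational_between) auto
  then obtain y where y: "\<And>k. max 0 (x - e k) < y k \<and> y k < min 1 (x + e k) \<and> y k \<notin> \<rat>"
    by metis
  have "y \<longlonglongrightarrow> x"
  proof (rule real_tendsto_sandwich)
    show "\<forall>\<^sub>F k in sequentially. x + - e k \<le> y k" "\<forall>\<^sub>F k in sequentially. y k \<le> x + e k"
      using y by (auto intro: always_eventually less_imp_le)
    show "(\<lambda>k. x + - e k) \<longlonglongrightarrow> x" "(\<lambda>k. x + e k) \<longlonglongrightarrow> x"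
      unfolding e_def by (rule LIMSEQ_inverse_real_of_nat_add_minus LIMSEQ_inverse_real_of_nat_add)+
  qed
  then have "(\<lambda>k. (y k, q)) \<longlonglongrightarrow> (x, q)" by (intro tendsto_Pair tendsto_const)
  moreover have "(y k, q) \<in> setU" for k using irrational_in_setU[OF q1 q] y[of k] by auto
  ultimately show ?thesis unfolding closure_sequential by (intro exI[of _ "\<lambda>k. (y k, q)"]) auto
qed

lemma closure_setU_iff_conj_tail_cond:
  assumes J: "(x, q) \<in> setJ" and x: "0 < x"
  shows "(x, q) \<in> closure setU \<longleftrightarrow> conj_tail_cond q x"
proof -
  have q: "q > 1" and xJ: "x \<le> Jmax q" using J setJ_iff by auto
  show ?thesis
  proof
    show "conj_tail_cond q x" if "(x, q) \<in> closure setU"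
      unfolding conj_tail_cond_def
      using closure_setU_rem_ge[OF J x that] conj_tail_lex_le_alpha_if_rem_ge[OF q x xJ] by blast
    show "(x, q) \<in> closure setU" if "conj_tail_cond q x"
      using in_closure_setU_int[OF J] in_closure_setU_nonint[OF q _ x xJ that] by blast
  qed
qed

lemma qg_condition_iff_conj_tail_cond:
  assumes q: "q > 1" and x: "0 < x" "x \<le> Jmax q"
  shows "(\<forall>n\<ge>1. qg x q n > 0 \<longrightarrow> lex_le (\<lambda>i. alpha q 1 - qg x q (n + 1 + i)) (\<lambda>i. alpha q (1 + i)))
    \<longleftrightarrow> conj_tail_cond q x"
proof -
  have shift: "(\<forall>n\<ge>1. P n) \<longleftrightarrow> (\<forall>m. P (Suc m))" for P :: "nat \<Rightarrow> bool"
    by (metis Suc_le_D Suc_le_mono le0 One_nat_def)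
  have "(\<lambda>i. alpha q 1 - qg x q (Suc m + 1 + i)) = (\<lambda>i. digmax q - qg_seq q x (Suc m + i))" for m
    using alpha_1[OF q] qg_eq_qg_seq[OF q x] by simp
  moreover have "(\<lambda>i. alpha q (1 + i)) = qg_seq q 1" using alpha_eq_qg_seq[OF q] by auto
  ultimately show ?thesis unfolding shift conj_tail_cond_def qg_eq_qg_seq[OF q x] by simp
qed

theorem theorem1p2:
  fixes x q :: real
  assumes "(x, q) \<in> setJ"
  shows "(x, q) \<in> closure setU \<longleftrightarrow>
    (\<forall>n\<ge>1. qg x q n > 0 \<longrightarrow>
       lex_le (\<lambda>i. alpha q 1 - qg x q (n + 1 + i)) (\<lambda>i. alpha q (1 + i)))"
proof -
  have q: "q > 1" and x: "0 \<le> x" "x \<le> Jmax q" using assms setJ_iff by auto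
  show ?thesis
  proof (cases "x = 0")
    case True
    then show ?thesis using zero_in_setU[OF q] closure_subset qg_zero by auto
  next
    case False
    then have "0 < x" using x by simp
    then show ?thesis
      using closure_setU_iff_conj_tail_cond[OF assms] qg_condition_iff_conj_tail_cond[OF q _ x(2)] by simp
  qed
qed

end
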